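(* Let $P(\mathbb{R})$ be the set of all Borel probability measures on $\mathbb{R}$ and let $\phi\colon P(\mathbb{R})\to P(\mathbb{R})$ be a surjective map with $d_{Ku}(\phi(\mu),\phi(\nu))=d_{Ku}(\mu,\nu)$ for all $\mu,\nu\in P(\mathbb{R})$. Then there exists a homeomorphism $g\colon\mathbb{R}\to\mathbb{R}$ such that $$\phi(\mu)=\mu\circ g\qquad(\mu\in P(\mathbb{R})).$$ Moreover, every transformation of this form is a surjective isometry of $P(\mathbb{R})$ with respect to the Kuiper distance.
   Context: For Borel probability measures $\mu,\nu$ on $\mathbb{R}$ with distribution functions $f_\mu(t)=\mu((-\infty,t])$, the Kuiper distance is $d_{Ku}(\mu,\nu)=\sup_{t}(f_\mu(t)-f_\nu(t))+\sup_t(f_\nu(t)-f_\mu(t))$, which equals $\sup\{|\mu(I)-\nu(I)|: I\subseteq\mathbb{R}\text{ a non-degenerate interval}\}$. For a homeomorphism $g$ of $\mathbb{R}$, $\mu\circ g$ is the Borel probability measure $(\mu\circ g)(B)=\mu(g(B))$. *)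

theory Defs
  imports "HOL-Probability.Probability"
begin

definition borel_prob_measures :: "real measure set" where
  "borel_prob_measures = {M. sets M = sets borel \<and> prob_space M}"

definition distfun :: "real measure \<Rightarrow> real \<Rightarrow> real" where
  "distfun M t = measure M {..t}"

definition kuiper_dist :: "real measure \<Rightarrow> real measure \<Rightarrow> real" where
  "kuiper_dist M N =
     (SUP t. distfun M t - distfun N t) + (SUP t. distfun N t - distfun M t)"

text \<open>mu o g, i.e. the measure B |-> mu(g(B)), for a homeomorphism g with inverse g'.
  This is the push-forward of mu under g' (preimage of B under g' is g(B)).\<close>
definition comp_homeo :: "real measure \<Rightarrow> (real \<Rightarrow> real) \<Rightarrow> real measure" where
  "comp_homeo M g = distr M borel (inv g)"

end

theory Submission
  imports Defs
begin

text \<open>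
  Dirac measures are singled out metrically: \<open>\<delta>\<^sub>a\<close> is the only measure \<open>\<mu>\<close> such that every
  \<open>\<nu> \<noteq> \<mu>\<close> is at Kuiper distance \<open>< 1\<close> from some \<open>\<rho>\<close> at distance \<open>1\<close> from \<open>\<mu>\<close>.
  Hence a surjective isometry \<open>\<phi>\<close> permutes the Dirac measures, \<open>\<phi> \<delta>\<^sub>a = \<delta>\<^bsub>G a\<^esub>\<close>,
  and since the distance from \<open>\<delta>\<^sub>a\<close> to \<open>\<mu>\<close> is \<open>1 - \<mu> {a}\<close>, it preserves the masses of atoms.
  So \<open>\<phi>\<close> maps the uniform measure on \<open>{a, b}\<close> to the one on \<open>{G a, G b}\<close>; two such measures
  are at distance \<open>< 1\<close> exactly when the pairs interlace, so \<open>G\<close> preserves interlacing, which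
  forces it to be monotone and hence a homeomorphism. Then \<open>\<phi>\<close> and the push-forward along \<open>G\<close>
  agree on finitely supported measures, which are dense, so they agree everywhere.

  Conversely, a push-forward along a homeomorphism merely reparametrizes the distribution
  functions (by their left limits if it reverses the orientation), which leaves the Kuiper
  distance unchanged.
\<close>

section \<open>Oscillation of bounded real functions\<close>

definition oscillation :: "(real \<Rightarrow> real) \<Rightarrow> real" where
  "oscillation h = (SUP t. h t) + (SUP t. - h t)"

lemma SUP_upper_bounded:
  fixes h :: "real \<Rightarrow> real"
  assumes "\<And>t. \<bar>h t\<bar> \<le> B"
  shows "h t \<le> (SUP t. h t)"
  by (rule cSUP_upper) (use assms in \<open>auto intro!: bdd_aboveI2[where M=B] simp: abs_le_iff\<close>)

lemma SUP_least_real: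
  fixes h :: "real \<Rightarrow> real"
  assumes "\<And>t. h t \<le> c"
  shows "(SUP t. h t) \<le> c"
  by (rule cSUP_least) (use assms in auto)

lemma SUP_surj_reindex:
  fixes f :: "real \<Rightarrow> real"
  assumes "surj h"
  shows "(SUP t. f (h t)) = (SUP s. f s)"
  using assms by (metis image_image)

lemma SUP_mult_left_nonneg:
  fixes h :: "real \<Rightarrow> real"
  assumes bounded: "\<And>t. \<bar>h t\<bar> \<le> B" and "p \<ge> 0"
  shows "(SUP t. p * h t) = p * (SUP t. h t)"
proof (cases "p = 0")
  case False
  then have p: "p > 0" using assms by simp
  have scaled_bounded: "\<bar>p * h t\<bar> \<le> p * B" for t
    using bounded p by (simp add: abs_mult mult_left_mono)
  have "(SUP t. h t) \<le> (SUP t. p * h t) / p"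
    by (intro SUP_least_real) (use SUP_upper_bounded[OF scaled_bounded] p in \<open>simp add: field_simps\<close>)
  moreover have "(SUP t. p * h t) \<le> p * (SUP t. h t)"
    by (intro SUP_least_real) (use SUP_upper_bounded[OF bounded] p in \<open>simp add: mult_left_mono\<close>)
  ultimately show ?thesis using p by (simp add: field_simps)
qed simp

lemma SUP_add_le:
  fixes h k :: "real \<Rightarrow> real"
  assumes "\<And>t. \<bar>h t\<bar> \<le> B" and "\<And>t. \<bar>k t\<bar> \<le> C"
  shows "(SUP t. h t + k t) \<le> (SUP t. h t) + (SUP t. k t)"
  by (intro SUP_least_real add_mono SUP_upper_bounded[OF assms(1)] SUP_upper_bounded[OF assms(2)])

lemma oscillation_mult_left:
  fixes h :: "real \<Rightarrow> real"
  assumes "\<And>t. \<bar>h t\<bar> \<le> B" and "p \<ge> 0"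
  shows "oscillation (\<lambda>t. p * h t) = p * oscillation h"
proof -
  have "(SUP t. - (p * h t)) = p * (SUP t. - h t)"
    using SUP_mult_left_nonneg[of "\<lambda>t. - h t" B p] assms by simp
  then show ?thesis
    unfolding oscillation_def using SUP_mult_left_nonneg[OF assms] by (simp add: algebra_simps)
qed

lemma oscillation_add_le:
  fixes h k :: "real \<Rightarrow> real"
  assumes "\<And>t. \<bar>h t\<bar> \<le> B" and "\<And>t. \<bar>k t\<bar> \<le> C"
  shows "oscillation (\<lambda>t. h t + k t) \<le> oscillation h + oscillation k"
proof -
  have "(SUP t. - (h t + k t)) \<le> (SUP t. - h t) + (SUP t. - k t)"
    using SUP_add_le[of "\<lambda>t. - h t" B "\<lambda>t. - k t" C] assms by simp
  then show ?thesis
    using SUP_add_le[of h B k C] assms unfolding oscillation_def by simp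
qed

lemma oscillation_le_range:
  fixes h :: "real \<Rightarrow> real"
  assumes "\<And>t. lo \<le> h t \<and> h t \<le> hi"
  shows "oscillation h \<le> hi - lo"
proof -
  have "(SUP t. h t) \<le> hi" "(SUP t. - h t) \<le> - lo"
    by (intro SUP_least_real; use assms in auto)+
  then show ?thesis unfolding oscillation_def by simp
qed

lemma oscillation_ge_diff:
  fixes h :: "real \<Rightarrow> real"
  assumes "\<And>t. \<bar>h t\<bar> \<le> B"
  shows "h s - h t \<le> oscillation h"
  using SUP_upper_bounded[of h B s] SUP_upper_bounded[of "\<lambda>t. - h t" B t] assms
  unfolding oscillation_def by simp

section \<open>The Kuiper distance as a metric\<close>

lemma borel_prob_measures_iff: "M \<in> borel_prob_measures \<longleftrightarrow> real_distribution M"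
  by (auto simp: borel_prob_measures_def real_distribution_def real_distribution_axioms_def)

lemma kuiper_dist_eq_oscillation: "kuiper_dist M N = oscillation (\<lambda>t. cdf M t - cdf N t)"
  unfolding kuiper_dist_def oscillation_def distfun_def cdf_def by simp

lemma kuiper_dist_commute: "kuiper_dist M N = kuiper_dist N M"
  unfolding kuiper_dist_def by simp

lemma kuiper_dist_self: "kuiper_dist M M = 0"
  unfolding kuiper_dist_def by simp

context real_distribution
begin

lemma cdf_nonneg_le_1: "0 \<le> cdf M t" "cdf M t \<le> 1"
  using cdf_bounded_prob cdf_nonneg by auto

lemma measure_lessThan_between_cdf:
  assumes "s < t"
  shows "cdf M s \<le> measure M {..<t}" "measure M {..<t} \<le> cdf M t"
  unfolding cdf_def using assms by (auto intro!: finite_measure_mono)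

lemma measure_lessThan_at_right: "((\<lambda>t. measure M {..<t}) \<longlongrightarrow> cdf M s) (at_right s)"
proof (rule tendsto_sandwich[where f="\<lambda>t. cdf M s" and h="cdf M"])
  show "\<forall>\<^sub>F t in at_right s. cdf M s \<le> measure M {..<t}"
    using measure_lessThan_between_cdf(1) by (auto intro!: eventually_at_rightI[where b="s + 1"])
  show "\<forall>\<^sub>F t in at_right s. measure M {..<t} \<le> cdf M t"
    using measure_lessThan_between_cdf(2) by (auto intro!: eventually_at_rightI[where b="s + 1"])
  show "(cdf M \<longlongrightarrow> cdf M s) (at_right s)"
    using cdf_is_right_cont by (simp add: continuous_within)
qed simp

lemma cdf_eq_measure_lessThan_plus_atom: "cdf M a = measure M {..<a} + measure M {a}"
proof -
  have "measure M ({..<a} \<union> {a}) = measure M {..<a} + measure M {a}"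
    by (rule finite_measure_Union) auto
  moreover have "{..a} = {..<a} \<union> {a}" by auto
  ultimately show ?thesis unfolding cdf_def by simp
qed

end

lemma abs_cdf_diff_le_1:
  assumes "real_distribution M" "real_distribution N"
  shows "\<bar>cdf M t - cdf N t\<bar> \<le> 1"
  using real_distribution.cdf_nonneg_le_1[OF assms(1), of t]
    real_distribution.cdf_nonneg_le_1[OF assms(2), of t] by linarith

lemma abs_measure_diff_le_1:
  assumes "real_distribution M" "real_distribution N"
  shows "\<bar>measure M A - measure N A\<bar> \<le> 1"
  using prob_space.prob_le_1[of M A] prob_space.prob_le_1[of N A] assms
    measure_nonneg[of M A] measure_nonneg[of N A]
  by (auto simp: real_distribution_def abs_le_iff simp del: measure_nonneg)

lemma SUP_cdf_diff_nonneg: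
  assumes "real_distribution M" "real_distribution N"
  shows "0 \<le> (SUP t. cdf M t - cdf N t)"
proof (rule tendsto_le[where F=at_top])
  show "((\<lambda>t. cdf M t - cdf N t) \<longlongrightarrow> 0) at_top"
    using tendsto_diff[OF real_distribution.cdf_lim_at_top_prob[OF assms(1)]
        real_distribution.cdf_lim_at_top_prob[OF assms(2)]] by simp
  show "\<forall>\<^sub>F t in at_top. cdf M t - cdf N t \<le> (SUP t. cdf M t - cdf N t)"
    by (intro always_eventually allI SUP_upper_bounded[where B=1] abs_cdf_diff_le_1 assms)
qed simp_all

lemma kuiper_dist_nonneg:
  assumes "real_distribution M" "real_distribution N"
  shows "0 \<le> kuiper_dist M N"
  using SUP_cdf_diff_nonneg[OF assms] SUP_cdf_diff_nonneg[OF assms(2,1)]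
  unfolding kuiper_dist_eq_oscillation oscillation_def by simp

lemma kuiper_dist_le_1:
  assumes M: "real_distribution M" and N: "real_distribution N"
  shows "kuiper_dist M N \<le> 1"
proof -
  interpret M: real_distribution M by fact
  interpret N: real_distribution N by fact
  have "cdf M s - cdf N s + (cdf N t - cdf M t) \<le> 1" for s t
    using M.cdf_nondecreasing[of s t] N.cdf_nondecreasing[of s t] M.cdf_nondecreasing[of t s] N.cdf_nondecreasing[of t s]
      M.cdf_nonneg_le_1[of s] N.cdf_nonneg_le_1[of s] M.cdf_nonneg_le_1[of t] N.cdf_nonneg_le_1[of t]
    by (cases "s \<le> t") auto
  then have "(SUP t. cdf N t - cdf M t) \<le> 1 - (cdf M s - cdf N s)" for s
    by (intro SUP_least_real) (simp add: algebra_simps)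
  then have "(SUP s. cdf M s - cdf N s) \<le> 1 - (SUP t. cdf N t - cdf M t)"
    by (intro SUP_least_real) (simp add: algebra_simps)
  then show ?thesis unfolding kuiper_dist_eq_oscillation oscillation_def by simp
qed

lemma kuiper_dist_triangle:
  assumes "real_distribution L" "real_distribution M" "real_distribution N"
  shows "kuiper_dist L N \<le> kuiper_dist L M + kuiper_dist M N"
  unfolding kuiper_dist_eq_oscillation
  using oscillation_add_le[of "\<lambda>t. cdf L t - cdf M t" 1 "\<lambda>t. cdf M t - cdf N t" 1]
    abs_cdf_diff_le_1 assms by simp

lemma kuiper_dist_eq_0_imp_eq:
  assumes "real_distribution M" "real_distribution N" "kuiper_dist M N = 0"
  shows "M = N"
proof (rule cdf_unique[OF assms(1,2)])
  have "(SUP t. cdf M t - cdf N t) = 0" "(SUP t. cdf N t - cdf M t) = 0"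
    using SUP_cdf_diff_nonneg[OF assms(1,2)] SUP_cdf_diff_nonneg[OF assms(2,1)] assms(3)
    unfolding kuiper_dist_def distfun_def cdf_def by linarith+
  then have "cdf M t = cdf N t" for t
    using SUP_upper_bounded[of "\<lambda>t. cdf M t - cdf N t" 1 t]
      SUP_upper_bounded[of "\<lambda>t. cdf N t - cdf M t" 1 t]
      abs_cdf_diff_le_1[OF assms(1,2)] abs_cdf_diff_le_1[OF assms(2,1)] by force
  then show "cdf M = cdf N" ..
qed

lemma kuiper_dist_eq_0_iff:
  assumes "real_distribution M" "real_distribution N"
  shows "kuiper_dist M N = 0 \<longleftrightarrow> M = N"
  using kuiper_dist_eq_0_imp_eq[OF assms] kuiper_dist_self by blast

text \<open>Replacing the distribution functions by their left limits does not change the Kuiper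
  distance; this is what makes it invariant under order-reversing homeomorphisms.\<close>

lemma SUP_measure_lessThan_diff:
  assumes M: "real_distribution M" and N: "real_distribution N"
  shows "(SUP s. measure M {..<s} - measure N {..<s}) = (SUP s. cdf M s - cdf N s)"
proof (rule antisym)
  show "(SUP s. measure M {..<s} - measure N {..<s}) \<le> (SUP s. cdf M s - cdf N s)"
  proof (rule SUP_least_real, rule tendsto_le[where F="at_left s" for s])
    fix s
    show "((\<lambda>t. cdf M t - cdf N t) \<longlongrightarrow> measure M {..<s} - measure N {..<s}) (at_left s)"
      by (intro tendsto_diff finite_borel_measure.cdf_at_left
          real_distribution.finite_borel_measure_M M N)
  qed (auto intro!: always_eventually SUP_upper_bounded[where B=1] abs_cdf_diff_le_1 M N)
  show "(SUP s. cdf M s - cdf N s) \<le> (SUP s. measure M {..<s} - measure N {..<s})"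
  proof (rule SUP_least_real, rule tendsto_le[where F="at_right s" for s])
    fix s
    show "((\<lambda>t. measure M {..<t} - measure N {..<t}) \<longlongrightarrow> cdf M s - cdf N s) (at_right s)"
      by (intro tendsto_diff real_distribution.measure_lessThan_at_right M N)
  qed (auto intro!: always_eventually SUP_upper_bounded[where B=1] abs_measure_diff_le_1 M N)
qed

lemma real_distribution_return: "real_distribution (return borel a)"
  unfolding real_distribution_def real_distribution_axioms_def
  by (auto intro: prob_space_return)

lemma cdf_return: "cdf (return borel a) t = (if a \<le> t then 1 else 0)"
  unfolding cdf_def by (simp add: measure_return)

lemma measure_return_singleton:
  fixes a c :: real
  shows "measure (return borel a) {c} = (if c = a then 1 else 0)"
  by (subst measure_return) (auto simp: indicator_def)

lemma return_borel_inject: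
  fixes a b :: real
  shows "return borel a = return borel b \<longleftrightarrow> a = b"
  using measure_return_singleton[of a a] measure_return_singleton[of b a]
  by (auto split: if_splits)

lemma kuiper_dist_return:
  assumes "real_distribution N"
  shows "kuiper_dist (return borel a) N = 1 - measure N {a}"
proof -
  interpret N: real_distribution N by fact
  let ?H = "\<lambda>t. if a \<le> t then 1 else 0 :: real"
  have bounded: "\<bar>?H t - cdf N t\<bar> \<le> 1" "\<bar>cdf N t - ?H t\<bar> \<le> 1" for t
    using N.cdf_nonneg_le_1[of t] by auto
  have above: "(SUP t. ?H t - cdf N t) = 1 - cdf N a"
  proof (rule antisym)
    show "(SUP t. ?H t - cdf N t) \<le> 1 - cdf N a"
      using N.cdf_nondecreasing[of a] N.cdf_nonneg_le_1 by (intro SUP_least_real) (smt (verit))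
    show "1 - cdf N a \<le> (SUP t. ?H t - cdf N t)"
      using SUP_upper_bounded[of "\<lambda>t. ?H t - cdf N t" 1 a] bounded by simp
  qed
  have below: "(SUP t. cdf N t - ?H t) = measure N {..<a}"
  proof (rule antisym)
    show "(SUP t. cdf N t - ?H t) \<le> measure N {..<a}"
      using N.measure_lessThan_between_cdf(1)[of _ a] N.cdf_nonneg_le_1
        measure_nonneg[of N "{..<a}"] by (intro SUP_least_real) (smt (verit))
    show "measure N {..<a} \<le> (SUP t. cdf N t - ?H t)"
    proof (rule tendsto_le[where F="at_left a"])
      show "((\<lambda>t. cdf N t - ?H t) \<longlongrightarrow> measure N {..<a}) (at_left a)"
      proof (rule Lim_transform_eventually)
        show "(cdf N \<longlongrightarrow> measure N {..<a}) (at_left a)"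
          by (rule N.cdf_at_left)
        show "\<forall>\<^sub>F t in at_left a. cdf N t = cdf N t - ?H t"
          by (rule eventually_at_leftI[where a="a - 1"]) auto
      qed
      show "\<forall>\<^sub>F t in at_left a. cdf N t - ?H t \<le> (SUP t. cdf N t - ?H t)"
        by (intro always_eventually allI SUP_upper_bounded[where B=1] bounded)
    qed simp_all
  qed
  show ?thesis
    using above below N.cdf_eq_measure_lessThan_plus_atom[of a]
    unfolding kuiper_dist_eq_oscillation oscillation_def cdf_return by simp
qed

section \<open>Push-forwards under homeomorphisms\<close>

lemma real_distribution_distr_borel:
  assumes "real_distribution M" "f \<in> borel_measurable borel"
  shows "real_distribution (distr M borel f)"
proof -
  interpret real_distribution M by fact
  show ?thesis using assms(2) by (intro real_distribution_distr) (simp cong: measurable_cong_sets)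
qed

lemma cdf_distr:
  assumes "real_distribution M" "f \<in> borel_measurable borel"
  shows "cdf (distr M borel f) t = measure M {x. f x \<le> t}"
proof -
  interpret real_distribution M by fact
  have "f \<in> borel_measurable M" using assms(2) by (simp cong: measurable_cong_sets)
  then show ?thesis unfolding cdf_def by (subst measure_distr) (auto simp: vimage_def)
qed

lemma homeomorphism_UNIV_borel_measurable:
  assumes "homeomorphism UNIV UNIV f g"
  shows "f \<in> borel_measurable borel" "g \<in> borel_measurable borel"
  using assms by (auto simp: homeomorphism_def intro: borel_measurable_continuous_onI)

lemma homeomorphism_UNIV_strict_mono_or_antimono:
  fixes f :: "real \<Rightarrow> real"
  assumes "homeomorphism UNIV UNIV f g"
  shows "strict_mono_on UNIV f \<or> strict_antimono_on UNIV f"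
proof -
  have "inj f" using assms by (metis homeomorphism_def inj_on_inverseI)
  then show ?thesis
    using injective_eq_monotone_map[of UNIV f] assms by (simp add: homeomorphism_def)
qed

lemma cdf_distr_homeomorphism_strict_mono:
  fixes f g :: "real \<Rightarrow> real"
  assumes hom: "homeomorphism UNIV UNIV f g" and mono: "strict_mono_on UNIV f"
    and "real_distribution M"
  shows "cdf (distr M borel f) t = cdf M (g t)"
proof -
  have "f (g t) = t" using hom by (simp add: homeomorphism_def)
  then have "{x. f x \<le> t} = {..g t}" using strict_mono_less_eq[OF mono, of _ "g t"] by auto
  then show ?thesis
    using cdf_distr[OF assms(3) homeomorphism_UNIV_borel_measurable(1)[OF hom]]
    unfolding cdf_def by simp
qed

lemma cdf_distr_homeomorphism_strict_antimono:
  fixes f g :: "real \<Rightarrow> real"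
  assumes hom: "homeomorphism UNIV UNIV f g" and anti: "strict_antimono_on UNIV f"
    and "real_distribution M"
  shows "cdf (distr M borel f) t = 1 - measure M {..<g t}"
proof -
  interpret real_distribution M by fact
  have fg: "f (g t) = t" using hom by (simp add: homeomorphism_def)
  have "f x \<le> t \<longleftrightarrow> x \<in> UNIV - {..<g t}" for x
  proof (cases x "g t" rule: linorder_cases)
    case less
    then have "f (g t) < f x" using anti by (simp add: monotone_on_def)
    then show ?thesis using less fg by simp
  next
    case greater
    then have "f x < f (g t)" using anti by (simp add: monotone_on_def)
    then show ?thesis using greater fg by simp
  qed (use fg in simp)
  then have "{x. f x \<le> t} = UNIV - {..<g t}" by blast
  then show ?thesis
    using cdf_distr[OF assms(3) homeomorphism_UNIV_borel_measurable(1)[OF hom]]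
      prob_compl[of "{..<g t}"] by simp
qed

lemma kuiper_dist_distr_homeomorphism:
  fixes f g :: "real \<Rightarrow> real"
  assumes hom: "homeomorphism UNIV UNIV f g"
    and M: "real_distribution M" and N: "real_distribution N"
  shows "kuiper_dist (distr M borel f) (distr N borel f) = kuiper_dist M N"
proof -
  have "surj g" using hom by (metis homeomorphism_def surjI)
  consider "strict_mono_on UNIV f" | "strict_antimono_on UNIV f"
    using homeomorphism_UNIV_strict_mono_or_antimono[OF hom] by blast
  then show ?thesis
  proof cases
    case 1
    show ?thesis
      using SUP_surj_reindex[OF \<open>surj g\<close>, of "\<lambda>s. cdf M s - cdf N s"]
        SUP_surj_reindex[OF \<open>surj g\<close>, of "\<lambda>s. cdf N s - cdf M s"]
      unfolding kuiper_dist_eq_oscillation oscillation_def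
        cdf_distr_homeomorphism_strict_mono[OF hom 1 M] cdf_distr_homeomorphism_strict_mono[OF hom 1 N]
      by simp
  next
    case 2
    have "kuiper_dist (distr M borel f) (distr N borel f) =
      (SUP t. measure N {..<g t} - measure M {..<g t}) + (SUP t. measure M {..<g t} - measure N {..<g t})"
      unfolding kuiper_dist_eq_oscillation oscillation_def
        cdf_distr_homeomorphism_strict_antimono[OF hom 2 M]
        cdf_distr_homeomorphism_strict_antimono[OF hom 2 N] by simp
    also have "\<dots> = (SUP s. measure N {..<s} - measure M {..<s}) + (SUP s. measure M {..<s} - measure N {..<s})"
      using SUP_surj_reindex[OF \<open>surj g\<close>, of "\<lambda>s. measure N {..<s} - measure M {..<s}"]
        SUP_surj_reindex[OF \<open>surj g\<close>, of "\<lambda>s. measure M {..<s} - measure N {..<s}"] by simp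
    also have "\<dots> = kuiper_dist M N"
      unfolding kuiper_dist_eq_oscillation oscillation_def
        SUP_measure_lessThan_diff[OF M N] SUP_measure_lessThan_diff[OF N M] by simp
    finally show ?thesis .
  qed
qed

lemma comp_homeo_eq_distr:
  assumes "homeomorphism UNIV UNIV g g'"
  shows "comp_homeo M g = distr M borel g'"
proof -
  have "inv g = g'"
    using assms by (intro inv_equality) (auto simp: homeomorphism_def)
  then show ?thesis unfolding comp_homeo_def by simp
qed

lemma distr_distr_homeomorphism:
  assumes hom: "homeomorphism UNIV UNIV f g" and "real_distribution M"
  shows "distr (distr M borel f) borel g = M"
proof -
  interpret real_distribution M by fact
  have "f \<in> borel_measurable M"
    using homeomorphism_UNIV_borel_measurable(1)[OF hom] by (simp cong: measurable_cong_sets)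
  then have "distr (distr M borel f) borel g = distr M borel (g \<circ> f)"
    by (rule distr_distr[OF homeomorphism_UNIV_borel_measurable(2)[OF hom]])
  also have "g \<circ> f = id" using hom by (auto simp: homeomorphism_def)
  finally show ?thesis using distr_id2[of borel M] by (simp add: id_def)
qed

lemma (in prob_space) prob_Int_full:
  assumes "prob S = 1" "S \<in> events" "A \<in> events"
  shows "prob (A \<inter> S) = prob A"
proof -
  have "prob (A - S) \<le> prob (space M - S)"
    using assms by (intro finite_measure_mono) (auto dest: sets.sets_into_space)
  also have "\<dots> = 0" using prob_compl[of S] assms by simp
  finally have "prob (A - S) = 0" using measure_nonneg[of M "A - S"] by linarith
  moreover have "prob ((A \<inter> S) \<union> (A - S)) = prob (A \<inter> S) + prob (A - S)"
    using assms by (intro finite_measure_Union) auto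
  moreover have "(A \<inter> S) \<union> (A - S) = A" by auto
  ultimately show ?thesis by simp
qed

lemma real_distribution_eqI_atoms:
  assumes M: "real_distribution M" and N: "real_distribution N" and "finite S"
    and full: "measure M S = 1" and atoms: "\<And>c. c \<in> S \<Longrightarrow> measure N {c} = measure M {c}"
  shows "M = N"
proof (rule cdf_unique[OF M N])
  interpret M: real_distribution M by fact
  interpret N: real_distribution N by fact
  have S: "S \<in> sets borel" using \<open>finite S\<close> by (simp add: countable_finite sets.countable)
  have subset: "measure N T = measure M T" if "T \<subseteq> S" for T
  proof -
    have "finite T" using finite_subset[OF that \<open>finite S\<close>] .
    then have "measure N T = (\<Sum>c\<in>T. measure N {c})" "measure M T = (\<Sum>c\<in>T. measure M {c})"
      by (auto intro: M.finite_measure_eq_sum_singleton N.finite_measure_eq_sum_singleton)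
    then show ?thesis using atoms that by (auto intro: sum.cong)
  qed
  have "measure N S = 1" using subset[of S] full by simp
  have "cdf M t = cdf N t" for t
  proof -
    have "cdf M t = measure M ({..t} \<inter> S)"
      unfolding cdf_def using M.prob_Int_full[OF full] S by simp
    also have "\<dots> = measure N ({..t} \<inter> S)" using subset[of "{..t} \<inter> S"] by simp
    also have "\<dots> = cdf N t"
      unfolding cdf_def using N.prob_Int_full[OF \<open>measure N S = 1\<close>] S by simp
    finally show ?thesis .
  qed
  then show "cdf M = cdf N" ..
qed

context real_distribution
begin

lemma real_distribution_uniform_measure:
  assumes "A \<in> sets borel" "0 < prob A"
  shows "real_distribution (uniform_measure M A)"
  using prob_space_uniform_measure[of M A] assms
  by (simp add: real_distribution_def real_distribution_axioms_def emeasure_eq_measure)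

lemma measure_uniform_measure_real:
  assumes "A \<in> sets borel" "0 < prob A" "B \<in> sets borel"
  shows "measure (uniform_measure M A) B = prob (A \<inter> B) / prob A"
  using assms by (simp add: emeasure_eq_measure)

lemma cdf_uniform_measure:
  assumes "A \<in> sets borel" "0 < prob A"
  shows "cdf (uniform_measure M A) t = prob (A \<inter> {..t}) / prob A"
  unfolding cdf_def using assms by (simp add: emeasure_eq_measure)

lemma cdf_eq_mixture_uniform_measure:
  assumes "A \<in> sets borel" "0 < prob A" "prob A < 1"
  shows "cdf M t = prob A * cdf (uniform_measure M A) t
                    + (1 - prob A) * cdf (uniform_measure M (UNIV - A)) t"
proof -
  have "prob (UNIV - A) = 1 - prob A" using prob_compl[of A] assms by simp
  moreover have "prob ((A \<inter> {..t}) \<union> ((UNIV - A) \<inter> {..t}))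
      = prob (A \<inter> {..t}) + prob ((UNIV - A) \<inter> {..t})"
    using assms by (intro finite_measure_Union) auto
  moreover have "(A \<inter> {..t}) \<union> ((UNIV - A) \<inter> {..t}) = {..t}" by auto
  ultimately show ?thesis
    using assms cdf_uniform_measure[of A t] cdf_uniform_measure[of "UNIV - A" t]
    unfolding cdf_def[of M] by (simp add: Int_commute)
qed

end

definition quantile :: "real measure \<Rightarrow> real \<Rightarrow> real" where
  "quantile M u = Inf {t. u \<le> cdf M t}"

lemma (in real_distribution) quantile_le_iff:
  assumes "0 < u" "u < 1"
  shows "quantile M u \<le> t \<longleftrightarrow> u \<le> cdf M t"
proof -
  let ?A = "{t. u \<le> cdf M t}"
  obtain t0 where "\<And>t. t \<ge> t0 \<Longrightarrow> u < cdf M t"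
    using order_tendstoD(1)[OF cdf_lim_at_top_prob \<open>u < 1\<close>] by (auto simp: eventually_at_top_linorder)
  then have nonempty: "?A \<noteq> {}" by (metis empty_Collect_eq less_imp_le order_refl)
  obtain t1 where "\<And>t. t \<le> t1 \<Longrightarrow> cdf M t < u"
    using order_tendstoD(2)[OF cdf_lim_at_bot \<open>0 < u\<close>] by (auto simp: eventually_at_bot_linorder)
  then have bdd: "bdd_below ?A" by (metis bdd_belowI le_cases mem_Collect_eq not_le)
  have "u \<le> cdf M (quantile M u)"
  proof (rule tendsto_le[where F="at_right (quantile M u)"])
    show "(cdf M \<longlongrightarrow> cdf M (quantile M u)) (at_right (quantile M u))"
      using cdf_is_right_cont by (simp add: continuous_within)
    show "\<forall>\<^sub>F s in at_right (quantile M u). u \<le> cdf M s"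
    proof (rule eventually_at_rightI[where b="quantile M u + 1"])
      fix s assume "s \<in> {quantile M u<..<quantile M u + 1}"
      then obtain a where "a \<in> ?A" "a < s"
        using cInf_less_iff[OF nonempty bdd] by (auto simp: quantile_def)
      then show "u \<le> cdf M s" using cdf_nondecreasing[of a s] by simp
    qed simp
  qed simp_all
  then show ?thesis
    using cdf_nondecreasing[of "quantile M u" t] cInf_lower[OF _ bdd, of t] by (auto simp: quantile_def)
qed

section \<open>A metric characterization of Dirac measures\<close>

lemma kuiper_dist_mixture_le:
  assumes N1: "real_distribution N1" and N2: "real_distribution N2" and R: "real_distribution R"
    and p: "0 \<le> p" "p \<le> 1"
    and mixture: "\<And>t. cdf M t = p * cdf N1 t + (1 - p) * cdf N2 t"
  shows "kuiper_dist M R \<le> p * kuiper_dist N1 R + (1 - p) * kuiper_dist N2 R"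
proof -
  have bounded: "\<bar>p * (cdf N1 t - cdf R t)\<bar> \<le> 1" "\<bar>(1 - p) * (cdf N2 t - cdf R t)\<bar> \<le> 1" for t
    using abs_cdf_diff_le_1[OF N1 R, of t] abs_cdf_diff_le_1[OF N2 R, of t] p
    by (auto simp: abs_mult intro: mult_le_one)
  have "kuiper_dist M R
      = oscillation (\<lambda>t. p * (cdf N1 t - cdf R t) + (1 - p) * (cdf N2 t - cdf R t))"
    unfolding kuiper_dist_eq_oscillation mixture by (simp add: algebra_simps)
  also have "\<dots> \<le> oscillation (\<lambda>t. p * (cdf N1 t - cdf R t))
                   + oscillation (\<lambda>t. (1 - p) * (cdf N2 t - cdf R t))"
    using bounded by (rule oscillation_add_le)
  also have "\<dots> = p * kuiper_dist N1 R + (1 - p) * kuiper_dist N2 R"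
    unfolding kuiper_dist_eq_oscillation using p
      oscillation_mult_left[of "\<lambda>t. cdf N1 t - cdf R t" 1 p, OF abs_cdf_diff_le_1[OF N1 R]]
      oscillation_mult_left[of "\<lambda>t. cdf N2 t - cdf R t" 1 "1 - p", OF abs_cdf_diff_le_1[OF N2 R]]
    by simp
  finally show ?thesis .
qed

text \<open>A purely metric property, hence preserved by surjective isometries; it holds exactly for
  the Dirac measures.\<close>

definition kuiper_separating :: "real measure \<Rightarrow> bool" where
  "kuiper_separating M \<longleftrightarrow>
     (\<forall>\<nu>. real_distribution \<nu> \<and> \<nu> \<noteq> M \<longrightarrow>
        (\<exists>\<rho>. real_distribution \<rho> \<and> kuiper_dist M \<rho> = 1 \<and> kuiper_dist \<nu> \<rho> < 1))"

lemma kuiper_separating_return: "kuiper_separating (return borel a)"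
  unfolding kuiper_separating_def
proof (intro allI impI, elim conjE)
  fix \<nu> assume N: "real_distribution \<nu>" and ne: "\<nu> \<noteq> return borel a"
  interpret N: real_distribution \<nu> by fact
  define p where "p = measure \<nu> {a}"
  have "p \<noteq> 1"
  proof
    assume "p = 1"
    then have "\<nu> = return borel a"
      using measure_return_singleton[of a]
      by (intro real_distribution_eqI_atoms[OF N real_distribution_return, of "{a}"]) (auto simp: p_def)
    with ne show False ..
  qed
  then have p: "0 \<le> p" "p < 1" by (simp_all add: p_def less_le)
  show "\<exists>\<rho>. real_distribution \<rho> \<and> kuiper_dist (return borel a) \<rho> = 1 \<and> kuiper_dist \<nu> \<rho> < 1"
  proof (cases "p = 0")
    case True
    then show ?thesis using N kuiper_dist_return[OF N] kuiper_dist_self[of \<nu>] by (auto simp: p_def)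
  next
    case False
    with p have "0 < p" by simp
    define \<rho> where "\<rho> = uniform_measure \<nu> (UNIV - {a})"
    have "N.prob (UNIV - {a}) = 1 - p" using N.prob_compl[of "{a}"] by (simp add: p_def)
    then have R: "real_distribution \<rho>" and "measure \<rho> {a} = 0"
      using p N.real_distribution_uniform_measure[of "UNIV - {a}"]
        N.measure_uniform_measure_real[of "UNIV - {a}" "{a}"] by (auto simp: \<rho>_def)
    then have far: "kuiper_dist (return borel a) \<rho> = 1" using kuiper_dist_return[OF R] by simp
    have "cdf (uniform_measure \<nu> {a}) t = cdf (return borel a) t" for t
      using \<open>0 < p\<close> N.cdf_uniform_measure[of "{a}" t]
      by (cases "a \<le> t") (simp_all add: cdf_return p_def)
    then have "cdf \<nu> t = p * cdf (return borel a) t + (1 - p) * cdf \<rho> t" for t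
      using N.cdf_eq_mixture_uniform_measure[of "{a}" t] \<open>0 < p\<close> p by (simp add: \<rho>_def p_def)
    then have "kuiper_dist \<nu> \<rho> \<le> p * kuiper_dist (return borel a) \<rho> + (1 - p) * kuiper_dist \<rho> \<rho>"
      using p by (intro kuiper_dist_mixture_le[OF real_distribution_return R R]) auto
    then show ?thesis using R far p by (auto simp: kuiper_dist_self)
  qed
qed

lemma (in real_distribution) cdf_strictly_between_0_1:
  assumes "\<And>a. M \<noteq> return borel a"
  obtains t where "0 < cdf M t" "cdf M t < 1"
proof -
  let ?q = "quantile M (1/2)"
  have "cdf M = cdf (return borel ?q)" if zero_one: "\<forall>t. cdf M t = 0 \<or> cdf M t = 1"
  proof
    fix t
    show "cdf M t = cdf (return borel ?q) t"
    proof (cases "?q \<le> t")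
      case True
      then have "1/2 \<le> cdf M t" using quantile_le_iff[of "1/2" t] by simp
      then show ?thesis using zero_one[rule_format, of t] True by (auto simp: cdf_return)
    next
      case False
      then have "cdf M t < 1/2" using quantile_le_iff[of "1/2" t] by simp
      then show ?thesis using zero_one[rule_format, of t] False by (auto simp: cdf_return)
    qed
  qed
  then obtain t where "cdf M t \<noteq> 0" "cdf M t \<noteq> 1"
    using cdf_unique[OF real_distribution_axioms real_distribution_return] assms by blast
  then show ?thesis using that cdf_nonneg_le_1[of t] by (simp add: less_le)
qed

lemma kuiper_separating_imp_return:
  assumes M: "real_distribution M" and "kuiper_separating M"
  shows "\<exists>a. M = return borel a"
proof (rule ccontr)
  assume "\<nexists>a. M = return borel a"
  then have "M \<noteq> return borel a" for a by blast
  interpret real_distribution M by fact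
  obtain t where t: "0 < cdf M t" "cdf M t < 1"
    using cdf_strictly_between_0_1 \<open>\<And>a. M \<noteq> return borel a\<close> by blast
  define p where "p = prob {..t}"
  have p: "0 < p" "p < 1" using t by (simp_all add: p_def cdf_def)
  define \<nu> where "\<nu> = uniform_measure M {..t}"
  define \<nu>' where "\<nu>' = uniform_measure M (UNIV - {..t})"
  have "prob (UNIV - {..t}) = 1 - p" using prob_compl[of "{..t}"] by (simp add: p_def)
  then have V: "real_distribution \<nu>" and V': "real_distribution \<nu>'"
    using p by (auto simp: \<nu>_def \<nu>'_def p_def intro!: real_distribution_uniform_measure)
  have "cdf \<nu> t = 1" using p by (simp add: \<nu>_def cdf_uniform_measure p_def)
  then have "\<nu> \<noteq> M" using t by auto
  then obtain \<rho> where R: "real_distribution \<rho>" and far: "kuiper_dist M \<rho> = 1"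
    and near: "kuiper_dist \<nu> \<rho> < 1"
    using \<open>kuiper_separating M\<close> V unfolding kuiper_separating_def by blast
  have "kuiper_dist M \<rho> \<le> p * kuiper_dist \<nu> \<rho> + (1 - p) * kuiper_dist \<nu>' \<rho>"
    using p cdf_eq_mixture_uniform_measure[of "{..t}"]
    by (intro kuiper_dist_mixture_le[OF V V' R]) (auto simp: \<nu>_def \<nu>'_def p_def)
  also have "\<dots> < p * 1 + (1 - p) * 1"
    using p near kuiper_dist_le_1[OF V' R] by (intro add_less_le_mono mult_left_mono) auto
  finally show False using far by simp
qed

lemma kuiper_separating_iff_return:
  assumes "real_distribution M"
  shows "kuiper_separating M \<longleftrightarrow> (\<exists>a. M = return borel a)"
  using kuiper_separating_imp_return[OF assms] kuiper_separating_return by blast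

section \<open>Two-point measures and interlacing\<close>

definition empirical_measure :: "'a set \<Rightarrow> ('a \<Rightarrow> real) \<Rightarrow> real measure" where
  "empirical_measure K x = distr (uniform_count_measure K) borel x"

lemma measurable_uniform_count_measure_borel: "x \<in> uniform_count_measure K \<rightarrow>\<^sub>M (borel :: real measure)"
proof -
  have "uniform_count_measure K \<rightarrow>\<^sub>M (borel :: real measure) = count_space K \<rightarrow>\<^sub>M borel"
    by (rule measurable_cong_sets) (simp_all add: sets_uniform_count_measure)
  then show ?thesis by simp
qed

lemma real_distribution_empirical_measure:
  assumes "finite K" "K \<noteq> {}"
  shows "real_distribution (empirical_measure K x)"
proof -
  interpret prob_space "uniform_count_measure K"
    using assms by (rule prob_space_uniform_count_measure)
  show ?thesis
    unfolding empirical_measure_def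
    by (rule real_distribution_distr[OF measurable_uniform_count_measure_borel])
qed

lemma measure_empirical_measure:
  assumes "finite K" "B \<in> sets borel"
  shows "measure (empirical_measure K x) B = card {k\<in>K. x k \<in> B} / card K"
proof -
  have "measure (empirical_measure K x) B = measure (uniform_count_measure K) (x -` B \<inter> K)"
    unfolding empirical_measure_def using assms(2)
    by (simp add: measure_distr[OF measurable_uniform_count_measure_borel] space_uniform_count_measure)
  also have "\<dots> = card (x -` B \<inter> K) / card K"
    using assms(1) by (intro measure_uniform_count_measure) auto
  also have "x -` B \<inter> K = {k\<in>K. x k \<in> B}" by auto
  finally show ?thesis .
qed

definition two_point :: "real \<Rightarrow> real \<Rightarrow> real measure" where
  "two_point a b = empirical_measure UNIV (\<lambda>k. if k then a else b)"

lemma real_distribution_two_point: "real_distribution (two_point a b)"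
  unfolding two_point_def by (rule real_distribution_empirical_measure) auto

lemma measure_two_point:
  assumes "B \<in> sets borel"
  shows "measure (two_point a b) B = (of_bool (a \<in> B) + of_bool (b \<in> B)) / 2"
proof -
  have "{k. (if k then a else b) \<in> B} = (if a \<in> B then {True} else {}) \<union> (if b \<in> B then {False} else {})"
    by auto
  then have "card {k. (if k then a else b) \<in> B} = of_bool (a \<in> B) + of_bool (b \<in> B)"
    by (auto simp: card_insert_if)
  then show ?thesis
    unfolding two_point_def
    using measure_empirical_measure[OF _ assms, of UNIV "\<lambda>k. if k then a else b"] by simp
qed

lemma cdf_two_point: "cdf (two_point a b) t = (of_bool (a \<le> t) + of_bool (b \<le> t)) / 2"
  unfolding cdf_def by (simp add: measure_two_point)

definition strictly_between :: "real \<Rightarrow> real \<Rightarrow> real \<Rightarrow> bool" where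
  "strictly_between x y z \<longleftrightarrow> min x z < y \<and> y < max x z"

text \<open>For distinct points: the pairs \<open>{a, b}\<close> and \<open>{c, e}\<close> interlace on the line.\<close>

definition interlaced :: "real \<Rightarrow> real \<Rightarrow> real \<Rightarrow> real \<Rightarrow> bool" where
  "interlaced a b c e \<longleftrightarrow> strictly_between a c b \<noteq> strictly_between a e b"

lemma interlaced_iff_min_max:
  assumes "distinct [a, b, c, e]"
  shows "interlaced a b c e \<longleftrightarrow>
           (min a b < min c e \<and> min c e < max a b \<and> max a b < max c e)
         \<or> (min c e < min a b \<and> min a b < max c e \<and> max c e < max a b)"
  using assms unfolding interlaced_def strictly_between_def by (auto simp: min_def max_def)

lemma kuiper_dist_two_point_lt_1_iff:
  assumes distinct: "distinct [a, b, c, e]"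
  shows "kuiper_dist (two_point a b) (two_point c e) < 1 \<longleftrightarrow> interlaced a b c e"
proof -
  define p q p' q' where "p = min a b" and "q = max a b" and "p' = min c e" and "q' = max c e"
  have order: "p < q" "p' < q'" "p \<noteq> p'" "p \<noteq> q'" "q \<noteq> p'" "q \<noteq> q'"
    using distinct unfolding p_def q_def p'_def q'_def by (auto simp: min_def max_def)
  define h where "h t = (of_bool (p \<le> t) + of_bool (q \<le> t)) / 2
                        - (of_bool (p' \<le> t) + of_bool (q' \<le> t)) / (2::real)" for t
  have "cdf (two_point a b) t - cdf (two_point c e) t = h t" for t
    unfolding cdf_two_point h_def p_def q_def p'_def q'_def by (auto simp: min_def max_def)
  then have dist: "kuiper_dist (two_point a b) (two_point c e) = oscillation h"
    unfolding kuiper_dist_eq_oscillation by simp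
  have bounded: "\<bar>h t\<bar> \<le> 1" for t unfolding h_def by auto
  have interlaced_iff: "interlaced a b c e \<longleftrightarrow> (p < p' \<and> p' < q \<and> q < q') \<or> (p' < p \<and> p < q' \<and> q' < q)"
    unfolding p_def q_def p'_def q'_def by (rule interlaced_iff_min_max[OF distinct])
  show ?thesis
  proof
    assume "kuiper_dist (two_point a b) (two_point c e) < 1"
    then have gap: "h s - h t < 1" for s t
      using oscillation_ge_diff[of h 1 s t, OF bounded] dist by simp
    show "interlaced a b c e"
    proof (rule ccontr)
      assume "\<not> interlaced a b c e"
      then consider "q < p'" | "q' < p" | "p < p' \<and> q' < q" | "p' < p \<and> q < q'"
        using order unfolding interlaced_iff by linarith
      then show False
      proof cases
        case 1 then show False using gap[of q "p - 1"] order by (simp add: h_def)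
      next
        case 2 then show False using gap[of "p' - 1" q'] order by (simp add: h_def)
      next
        case 3 then show False using gap[of p q'] order by (simp add: h_def)
      next
        case 4 then show False using gap[of q p'] order by (simp add: h_def)
      qed
    qed
  next
    assume "interlaced a b c e"
    then have "(\<forall>t. 0 \<le> h t \<and> h t \<le> 1/2) \<or> (\<forall>t. -1/2 \<le> h t \<and> h t \<le> 0)"
      unfolding interlaced_iff h_def by auto
    then have "oscillation h \<le> 1/2"
      using oscillation_le_range[of 0 h "1/2"] oscillation_le_range[of "-1/2" h 0] by auto
    then show "kuiper_dist (two_point a b) (two_point c e) < 1" using dist by simp
  qed
qed

section \<open>Bijections of the line preserving interlacing are monotone\<close>

lemma nested_intervals_common_point:
  fixes l r :: "nat \<Rightarrow> real"
  assumes l: "\<And>n. l n < l (Suc n)" and r: "\<And>n. r (Suc n) < r n" and lr: "\<And>n. l n < r n"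
  obtains c where "\<And>n. l n < c" "\<And>n. c < r n"
proof
  have "incseq l" "decseq r"
    using l r by (auto intro: incseq_SucI decseq_SucI less_imp_le)
  then have below: "l m < r n" for m n
    using lr[of "max m n"] by (smt (verit) decseqD incseqD max.cobounded1 max.cobounded2)
  then have bdd: "bdd_above (range l)" by (intro bdd_aboveI2[where M="r 0"]) (simp add: less_imp_le)
  show "l n < Sup (range l)" for n
    using l[of n] cSUP_upper[OF _ bdd, of "Suc n"] by simp
  show "Sup (range l) < r n" for n
    using r[of n] cSUP_least[of UNIV l "r (Suc n)"] below[of _ "Suc n"] by (simp add: less_imp_le)
qed

locale interlacing_preserving =
  fixes G :: "real \<Rightarrow> real"
  assumes inj: "inj G" and surj: "surj G"
    and interlaced_iff:
      "\<And>a b c e. distinct [a, b, c, e] \<Longrightarrow> interlaced (G a) (G b) (G c) (G e) \<longleftrightarrow> interlaced a b c e"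
begin

lemma strictly_between_outside:
  assumes "a < y" "y < b" "\<not> strictly_between (G a) (G y) (G b)" "w < a \<or> b < w"
  shows "strictly_between (G a) (G w) (G b)"
proof -
  have "interlaced a b y w" using assms unfolding interlaced_def strictly_between_def by auto
  then show ?thesis
    using assms(3) interlaced_iff[of a b y w] assms unfolding interlaced_def by auto
qed

lemma not_strictly_between_inside:
  assumes "a < y" "y < b" "\<not> strictly_between (G a) (G y) (G b)" "a < w" "w < b" "w \<noteq> y"
  shows "\<not> strictly_between (G a) (G w) (G b)"
proof -
  have "\<not> interlaced a b y w" using assms unfolding interlaced_def strictly_between_def by auto
  then show ?thesis
    using assms(3) interlaced_iff[of a b y w] assms unfolding interlaced_def by auto
qed

text \<open>If \<open>G y\<close> escaped the interval spanned by \<open>G x\<close> and \<open>G z\<close>, the images of ever larger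
  intervals around \<open>y\<close> would form a nested sequence of intervals whose common point has no
  preimage.\<close>

lemma strictly_between_image:
  assumes "x < y" "y < z"
  shows "strictly_between (G x) (G y) (G z)"
proof (rule ccontr)
  assume outside: "\<not> strictly_between (G x) (G y) (G z)"
  define a b where "a n = x - real n" and "b n = z + real n" for n
  have around: "a n < y" "y < b n" for n using assms unfolding a_def b_def by auto
  have wider: "a (Suc n) < a n" "b n < b (Suc n)" for n unfolding a_def b_def by auto
  have escaping: "\<not> strictly_between (G (a n)) (G y) (G (b n))" for n
  proof (induction n)
    case 0 then show ?case using outside by (simp add: a_def b_def)
  next
    case (Suc n)
    have "strictly_between (G (a n)) (G (a (Suc n))) (G (b n))"
      "strictly_between (G (a n)) (G (b (Suc n))) (G (b n))"
      by (intro strictly_between_outside[OF around Suc]; use wider in auto)+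
    then show ?case using Suc unfolding strictly_between_def by (auto simp: min_def max_def)
  qed
  define l r where "l n = min (G (a n)) (G (b n))" and "r n = max (G (a n)) (G (b n))" for n
  have nested: "l n < l (Suc n)" "r (Suc n) < r n" "l n < r n" for n
  proof -
    have "strictly_between (G (a n)) (G (a (Suc n))) (G (b n))"
      "strictly_between (G (a n)) (G (b (Suc n))) (G (b n))"
      by (intro strictly_between_outside[OF around escaping]; use wider in auto)+
    then show "l n < l (Suc n)" "r (Suc n) < r n" "l n < r n"
      unfolding strictly_between_def l_def r_def by auto
  qed
  obtain c where c: "\<And>n. l n < c" "\<And>n. c < r n"
    using nested_intervals_common_point[of l r] nested by blast
  obtain w where w: "G w = c" using surj by (metis surj_def)
  obtain n :: nat where "real n > \<bar>w\<bar> + \<bar>x\<bar> + \<bar>z\<bar>" using reals_Archimedean2 by blast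
  then have "a n < w" "w < b n" unfolding a_def b_def by auto
  moreover have "strictly_between (G (a n)) (G w) (G (b n))"
    using c[of n] w unfolding strictly_between_def l_def r_def by simp
  ultimately show False
    using escaping[of n] not_strictly_between_inside[OF around escaping] by (cases "w = y") auto
qed

lemma less_iff_less_of_less:
  assumes "u < v" "v < w"
  shows "G u < G v \<longleftrightarrow> G v < G w" "G u < G v \<longleftrightarrow> G u < G w"
  using strictly_between_image[OF assms] unfolding strictly_between_def
  by (auto simp: min_def max_def split: if_splits)

lemma strict_mono_or_antimono: "strict_mono_on UNIV G \<or> strict_antimono_on UNIV G"
proof -
  have orientation: "G a < G b \<longleftrightarrow> G 0 < G 1" if "a < b" for a b
  proof -
    define m where "m = min a 0 - 1"
    have m: "m < a" "m < 0" unfolding m_def by auto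
    have "G m < G a \<longleftrightarrow> G m < G 0"
      using less_iff_less_of_less(2)[OF m(1)] less_iff_less_of_less(2)[OF m(2)]
      by (cases a "0::real" rule: linorder_cases) auto
    then show ?thesis
      using less_iff_less_of_less(1)[OF m(1) that] less_iff_less_of_less(1)[OF m(2), of 1] by simp
  qed
  have "G a \<noteq> G b" if "a < b" for a b using inj that by (auto dest: injD)
  then show ?thesis
    using orientation by (cases "G 0 < G 1") (auto simp: monotone_on_def, fastforce)
qed

end

lemma continuous_on_strict_mono_surj:
  fixes f :: "real \<Rightarrow> real"
  assumes "strict_mono_on UNIV f" "surj f"
  shows "continuous_on UNIV f"
  using assms by (intro continuous_onI_mono) (auto simp: strict_mono_less_eq)

lemma continuous_on_strict_mono_or_antimono_surj:
  fixes f :: "real \<Rightarrow> real"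
  assumes "strict_mono_on UNIV f \<or> strict_antimono_on UNIV f" "surj f"
  shows "continuous_on UNIV f"
  using assms(1)
proof
  assume "strict_antimono_on UNIV f"
  then have "strict_mono_on UNIV (\<lambda>x. - f x)" by (auto simp: monotone_on_def)
  moreover have "surj (\<lambda>x. - f x)" using assms(2) by (metis surj_def minus_minus)
  ultimately have "continuous_on UNIV (\<lambda>x. - (- f x))"
    by (intro continuous_on_minus continuous_on_strict_mono_surj)
  then show ?thesis by simp
qed (use assms(2) continuous_on_strict_mono_surj in blast)

lemma homeomorphism_inv_strict_mono_or_antimono_surj:
  fixes f :: "real \<Rightarrow> real"
  assumes mono: "strict_mono_on UNIV f \<or> strict_antimono_on UNIV f" and "surj f"
  shows "homeomorphism UNIV UNIV (inv f) f"
proof -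
  have "inj f"
  proof (rule injI, rule ccontr)
    fix x y assume "f x = f y" "x \<noteq> y"
    then show False using mono by (cases x y rule: linorder_cases) (auto simp: monotone_on_def, force+)
  qed
  then have inv_f: "inv f (f x) = x" for x by simp
  have f_inv: "f (inv f y) = y" for y using \<open>surj f\<close> by (simp add: surj_f_inv_f)
  have "strict_mono_on UNIV (inv f) \<or> strict_antimono_on UNIV (inv f)"
    using mono f_inv by (auto simp: monotone_on_def) (metis not_less_iff_gr_or_eq)+
  moreover have "surj (inv f)" using inv_f by (metis surjI)
  ultimately show ?thesis
    unfolding homeomorphism_def using inv_f f_inv mono \<open>surj f\<close>
    by (auto intro!: continuous_on_strict_mono_or_antimono_surj)
qed

section \<open>Approximation by finitely supported measures\<close>

lemma measure_empirical_measure_image: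
  assumes "finite K" "K \<noteq> {}"
  shows "measure (empirical_measure K x) (x ` K) = 1"
proof -
  have "x ` K \<in> sets borel" using assms by (simp add: countable_finite sets.countable)
  moreover have "{k\<in>K. x k \<in> x ` K} = K" by auto
  ultimately show ?thesis using assms by (simp add: measure_empirical_measure)
qed

lemma card_atLeastAtMost_le_real:
  assumes "0 \<le> y"
  shows "card {k\<in>{1..n}. real k \<le> y} = min n (nat \<lfloor>y\<rfloor>)"
proof -
  have "{k\<in>{1..n}. real k \<le> y} = {1..min n (nat \<lfloor>y\<rfloor>)}"
  proof (rule set_eqI)
    fix k
    have "real k \<le> y \<longleftrightarrow> of_int (int k) \<le> y" by simp
    also have "\<dots> \<longleftrightarrow> int k \<le> \<lfloor>y\<rfloor>" by (simp only: le_floor_iff)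
    also have "\<dots> \<longleftrightarrow> k \<le> nat \<lfloor>y\<rfloor>" using assms by (simp add: le_nat_iff)
    finally show "k \<in> {k\<in>{1..n}. real k \<le> y} \<longleftrightarrow> k \<in> {1..min n (nat \<lfloor>y\<rfloor>)}" by auto
  qed
  then show ?thesis by simp
qed

lemma abs_diff_card_div_le:
  assumes c: "0 \<le> c" "c \<le> 1" and n: "0 < n"
  shows "\<bar>c - card {k\<in>{1..n}. real k \<le> real (n + 1) * c} / real n\<bar> \<le> 1 / real n"
proof -
  define y where "y = real (n + 1) * c"
  define m where "m = min n (nat \<lfloor>y\<rfloor>)"
  have "0 \<le> y" using c by (simp add: y_def)
  then have floor: "real (nat \<lfloor>y\<rfloor>) = of_int \<lfloor>y\<rfloor>" by simp
  have "real m \<le> y" using floor unfolding m_def by linarith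
  then have "real m - real n * c \<le> 1" using c by (simp add: y_def algebra_simps)
  moreover have "real n * c - real m \<le> 1"
  proof (cases "n \<le> nat \<lfloor>y\<rfloor>")
    case True
    then show ?thesis using mult_left_le[OF c(2), of "real n"] by (simp add: m_def)
  next
    case False
    then have "y < real m + 1" using floor unfolding m_def by linarith
    then show ?thesis using c by (simp add: y_def algebra_simps)
  qed
  ultimately have "\<bar>real n * c - real m\<bar> \<le> 1" by linarith
  moreover have "c - real m / real n = (real n * c - real m) / real n"
    using n by (simp add: field_simps)
  ultimately have "\<bar>c - real m / real n\<bar> \<le> 1 / real n"
    using n by (simp add: divide_right_mono)
  moreover have "card {k\<in>{1..n}. real k \<le> real (n + 1) * c} = m"
    using card_atLeastAtMost_le_real[OF \<open>0 \<le> y\<close>] unfolding m_def y_def .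
  ultimately show ?thesis by simp
qed

lemma (in real_distribution) kuiper_dist_empirical_quantiles_le:
  assumes "0 < n"
  shows "kuiper_dist M (empirical_measure {1..n} (\<lambda>k. quantile M (real k / real (n + 1)))) \<le> 2 / real n"
proof -
  define x where "x k = quantile M (real k / real (n + 1))" for k
  have "cdf (empirical_measure {1..n} x) t = card {k\<in>{1..n}. real k \<le> real (n + 1) * cdf M t} / real n"
    for t
  proof -
    have "x k \<le> t \<longleftrightarrow> real k \<le> real (n + 1) * cdf M t" if "k \<in> {1..n}" for k
    proof -
      have "0 < real k / real (n + 1)" "real k / real (n + 1) < 1" using that by auto
      then have "x k \<le> t \<longleftrightarrow> real k / real (n + 1) \<le> cdf M t"
        unfolding x_def by (rule quantile_le_iff)
      then show ?thesis by (simp add: divide_le_eq mult.commute)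
    qed
    then have "{k\<in>{1..n}. x k \<in> {..t}} = {k\<in>{1..n}. real k \<le> real (n + 1) * cdf M t}" by auto
    then show ?thesis
      unfolding cdf_def by (subst measure_empirical_measure) simp_all
  qed
  then have "\<bar>cdf M t - cdf (empirical_measure {1..n} x) t\<bar> \<le> 1 / real n" for t
    using abs_diff_card_div_le[of "cdf M t" n] cdf_nonneg_le_1[of t] assms by simp
  then have "- (1 / real n) \<le> cdf M t - cdf (empirical_measure {1..n} x) t
      \<and> cdf M t - cdf (empirical_measure {1..n} x) t \<le> 1 / real n" for t
    unfolding abs_le_iff by (metis minus_diff_eq neg_le_iff_le)
  then have "kuiper_dist M (empirical_measure {1..n} x) \<le> 1 / real n - - (1 / real n)"
    unfolding kuiper_dist_eq_oscillation by (rule oscillation_le_range)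
  then show ?thesis by (simp add: x_def[abs_def])
qed

lemma (in real_distribution) finitely_supported_approximation:
  assumes "0 < e"
  obtains \<nu> S where "real_distribution \<nu>" "finite S" "measure \<nu> S = 1" "kuiper_dist M \<nu> < e"
proof -
  obtain n :: nat where n: "2 / e < real n" using reals_Archimedean2 by blast
  then have "0 < n" using assms by (auto intro: Nat.gr0I)
  have "2 / real n < e" using n assms \<open>0 < n\<close> by (simp add: field_simps)
  let ?x = "\<lambda>k. quantile M (real k / real (n + 1))"
  show ?thesis
  proof (rule that)
    show "real_distribution (empirical_measure {1..n} ?x)"
      using \<open>0 < n\<close> by (intro real_distribution_empirical_measure) auto
    show "measure (empirical_measure {1..n} ?x) (?x ` {1..n}) = 1"
      using \<open>0 < n\<close> by (intro measure_empirical_measure_image) auto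
    show "kuiper_dist M (empirical_measure {1..n} ?x) < e"
      using kuiper_dist_empirical_quantiles_le[OF \<open>0 < n\<close>] \<open>2 / real n < e\<close> by linarith
  qed simp
qed

definition kuiper_surj_isometry :: "(real measure \<Rightarrow> real measure) \<Rightarrow> bool" where
  "kuiper_surj_isometry \<phi> \<longleftrightarrow>
     (\<forall>\<mu>\<in>borel_prob_measures. \<phi> \<mu> \<in> borel_prob_measures)
     \<and> \<phi> ` borel_prob_measures = borel_prob_measures
     \<and> (\<forall>\<mu>\<in>borel_prob_measures. \<forall>\<nu>\<in>borel_prob_measures.
          kuiper_dist (\<phi> \<mu>) (\<phi> \<nu>) = kuiper_dist \<mu> \<nu>)"

lemma kuiper_surj_isometry_comp_homeo:
  assumes hom: "homeomorphism UNIV UNIV g g'"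
  shows "kuiper_surj_isometry (\<lambda>\<mu>. comp_homeo \<mu> g)"
proof -
  have hom': "homeomorphism UNIV UNIV g' g" using hom by (rule homeomorphism_symD)
  have "\<mu> \<in> (\<lambda>\<mu>. distr \<mu> borel g') ` borel_prob_measures" if "\<mu> \<in> borel_prob_measures" for \<mu>
  proof
    show "\<mu> = distr (distr \<mu> borel g) borel g'"
      using distr_distr_homeomorphism[OF hom] that by (simp add: borel_prob_measures_iff)
    show "distr \<mu> borel g \<in> borel_prob_measures"
      using real_distribution_distr_borel homeomorphism_UNIV_borel_measurable(1)[OF hom] that
      by (simp add: borel_prob_measures_iff)
  qed
  then show ?thesis
    unfolding kuiper_surj_isometry_def comp_homeo_eq_distr[OF hom]
    using real_distribution_distr_borel homeomorphism_UNIV_borel_measurable(1)[OF hom']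
      kuiper_dist_distr_homeomorphism[OF hom']
    by (auto simp: borel_prob_measures_iff)
qed

locale kuiper_isometry =
  fixes \<phi> :: "real measure \<Rightarrow> real measure"
  assumes surj_isometry: "kuiper_surj_isometry \<phi>"
begin

lemma real_distribution_image: "real_distribution \<mu> \<Longrightarrow> real_distribution (\<phi> \<mu>)"
  using surj_isometry by (simp add: kuiper_surj_isometry_def borel_prob_measures_iff)

lemma kuiper_dist_image:
  "real_distribution \<mu> \<Longrightarrow> real_distribution \<nu> \<Longrightarrow> kuiper_dist (\<phi> \<mu>) (\<phi> \<nu>) = kuiper_dist \<mu> \<nu>"
  using surj_isometry by (simp add: kuiper_surj_isometry_def borel_prob_measures_iff)

lemma image_eq_iff:
  assumes "real_distribution \<mu>" "real_distribution \<nu>"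
  shows "\<phi> \<mu> = \<phi> \<nu> \<longleftrightarrow> \<mu> = \<nu>"
  using kuiper_dist_eq_0_iff[OF assms] kuiper_dist_eq_0_iff[OF real_distribution_image[OF assms(1)]
      real_distribution_image[OF assms(2)]] kuiper_dist_image[OF assms] by simp

lemma obtain_preimage:
  assumes "real_distribution \<nu>"
  obtains \<mu> where "real_distribution \<mu>" "\<phi> \<mu> = \<nu>"
proof -
  have "\<nu> \<in> \<phi> ` borel_prob_measures"
    using surj_isometry assms by (simp add: kuiper_surj_isometry_def borel_prob_measures_iff)
  then show ?thesis using that by (auto simp: borel_prob_measures_iff)
qed

lemma kuiper_separating_image_iff:
  assumes M: "real_distribution \<mu>"
  shows "kuiper_separating (\<phi> \<mu>) \<longleftrightarrow> kuiper_separating \<mu>"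
proof
  assume sep: "kuiper_separating (\<phi> \<mu>)"
  show "kuiper_separating \<mu>" unfolding kuiper_separating_def
  proof (intro allI impI, elim conjE)
    fix \<nu> assume N: "real_distribution \<nu>" and "\<nu> \<noteq> \<mu>"
    then have "\<phi> \<nu> \<noteq> \<phi> \<mu>" using image_eq_iff[OF N M] by simp
    then obtain \<rho>' where R': "real_distribution \<rho>'" "kuiper_dist (\<phi> \<mu>) \<rho>' = 1" "kuiper_dist (\<phi> \<nu>) \<rho>' < 1"
      using sep real_distribution_image[OF N] unfolding kuiper_separating_def by blast
    obtain \<rho> where R: "real_distribution \<rho>" "\<phi> \<rho> = \<rho>'" using obtain_preimage[OF R'(1)] .
    show "\<exists>\<rho>. real_distribution \<rho> \<and> kuiper_dist \<mu> \<rho> = 1 \<and> kuiper_dist \<nu> \<rho> < 1"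
      using R R' kuiper_dist_image[OF M R(1)] kuiper_dist_image[OF N R(1)] by auto
  qed
next
  assume sep: "kuiper_separating \<mu>"
  show "kuiper_separating (\<phi> \<mu>)" unfolding kuiper_separating_def
  proof (intro allI impI, elim conjE)
    fix \<nu>' assume "real_distribution \<nu>'" and "\<nu>' \<noteq> \<phi> \<mu>"
    obtain \<nu> where N: "real_distribution \<nu>" "\<phi> \<nu> = \<nu>'"
      using obtain_preimage[OF \<open>real_distribution \<nu>'\<close>] .
    with \<open>\<nu>' \<noteq> \<phi> \<mu>\<close> have "\<nu> \<noteq> \<mu>" by auto
    with N obtain \<rho> where R: "real_distribution \<rho>" "kuiper_dist \<mu> \<rho> = 1" "kuiper_dist \<nu> \<rho> < 1"
      using sep unfolding kuiper_separating_def by blast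
    show "\<exists>\<rho>. real_distribution \<rho> \<and> kuiper_dist (\<phi> \<mu>) \<rho> = 1 \<and> kuiper_dist \<nu>' \<rho> < 1"
      using R N real_distribution_image[OF R(1)] kuiper_dist_image[OF M R(1)]
        kuiper_dist_image[OF N(1) R(1)] by auto
  qed
qed

lemma image_return_ex: "\<exists>b. \<phi> (return borel a) = return borel b"
  using kuiper_separating_image_iff[OF real_distribution_return] kuiper_separating_return
    kuiper_separating_iff_return[OF real_distribution_image[OF real_distribution_return]] by blast

definition point_map :: "real \<Rightarrow> real" where
  "point_map a = (SOME b. \<phi> (return borel a) = return borel b)"

lemma image_return: "\<phi> (return borel a) = return borel (point_map a)"
  unfolding point_map_def using someI_ex[OF image_return_ex] .

lemma inj_point_map: "inj point_map"
proof (rule injI)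
  fix a b assume "point_map a = point_map b"
  then have "\<phi> (return borel a) = \<phi> (return borel b)" by (simp add: image_return)
  then show "a = b"
    using image_eq_iff[OF real_distribution_return real_distribution_return] return_borel_inject by simp
qed

lemma surj_point_map: "surj point_map"
proof -
  have "b \<in> range point_map" for b
  proof -
    obtain \<mu> where M: "real_distribution \<mu>" "\<phi> \<mu> = return borel b"
      using obtain_preimage[OF real_distribution_return] .
    then have "kuiper_separating \<mu>"
      using kuiper_separating_image_iff[OF M(1)] kuiper_separating_return by simp
    then obtain a where "\<mu> = return borel a" using kuiper_separating_imp_return[OF M(1)] by blast
    with M(2) have "point_map a = b" by (simp add: image_return return_borel_inject)
    then show ?thesis by blast
  qed
  then show ?thesis by blast
qed

lemma measure_image_singleton:
  assumes "real_distribution \<mu>"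
  shows "measure (\<phi> \<mu>) {point_map c} = measure \<mu> {c}"
  using kuiper_dist_image[OF real_distribution_return assms, of c]
    kuiper_dist_return[OF real_distribution_image[OF assms]] kuiper_dist_return[OF assms]
  by (simp add: image_return)

lemma image_two_point:
  assumes "a \<noteq> b"
  shows "\<phi> (two_point a b) = two_point (point_map a) (point_map b)"
proof -
  have ne: "point_map a \<noteq> point_map b" using inj_point_map assms by (auto dest: injD)
  have half: "measure (two_point x y) {x} = 1/2" "measure (two_point x y) {y} = 1/2"
    if "x \<noteq> y" for x y :: real
    using that by (simp_all add: measure_two_point)
  show ?thesis
  proof (rule real_distribution_eqI_atoms[symmetric, of _ _ "{point_map a, point_map b}"])
    show "measure (two_point (point_map a) (point_map b)) {point_map a, point_map b} = 1"
      by (simp add: measure_two_point countable_finite sets.countable)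
    fix c assume "c \<in> {point_map a, point_map b}"
    then show "measure (\<phi> (two_point a b)) {c} = measure (two_point (point_map a) (point_map b)) {c}"
      using measure_image_singleton[OF real_distribution_two_point] half[OF assms] half[OF ne] by auto
  qed (auto intro: real_distribution_two_point real_distribution_image)
qed

sublocale point_map: interlacing_preserving point_map
proof
  fix a b c e :: real assume d: "distinct [a, b, c, e]"
  have dG: "distinct [point_map a, point_map b, point_map c, point_map e]"
    using d inj_point_map by (auto dest: injD)
  have "kuiper_dist (two_point (point_map a) (point_map b)) (two_point (point_map c) (point_map e))
      = kuiper_dist (two_point a b) (two_point c e)"
    using kuiper_dist_image[OF real_distribution_two_point real_distribution_two_point, of a b c e]
      d by (simp add: image_two_point)
  then show "interlaced (point_map a) (point_map b) (point_map c) (point_map e) \<longleftrightarrow> interlaced a b c e"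
    using kuiper_dist_two_point_lt_1_iff[OF d] kuiper_dist_two_point_lt_1_iff[OF dG] by simp
qed (fact inj_point_map surj_point_map)+

lemma homeomorphism_point_map: "homeomorphism UNIV UNIV (inv point_map) point_map"
  by (rule homeomorphism_inv_strict_mono_or_antimono_surj[OF point_map.strict_mono_or_antimono surj_point_map])

lemma image_eq_distr_finite_support:
  assumes N: "real_distribution \<nu>" and "finite S" and full: "measure \<nu> S = 1"
  shows "\<phi> \<nu> = distr \<nu> borel point_map"
proof -
  interpret real_distribution \<nu> by fact
  have meas: "point_map \<in> borel_measurable \<nu>"
    using homeomorphism_UNIV_borel_measurable(2)[OF homeomorphism_point_map]
    by (simp cong: measurable_cong_sets)
  have image: "measure (distr \<nu> borel point_map) (point_map ` T) = measure \<nu> T" if "finite T" for T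
  proof -
    have "point_map ` T \<in> sets borel" using that by (simp add: countable_finite sets.countable)
    moreover have "point_map -` point_map ` T \<inter> space \<nu> = T"
      using inj_point_map by (auto dest: injD)
    ultimately show ?thesis by (simp add: measure_distr[OF meas])
  qed
  show ?thesis
  proof (rule real_distribution_eqI_atoms[symmetric, of _ _ "point_map ` S"])
    show "real_distribution (distr \<nu> borel point_map)"
      using meas by (rule real_distribution_distr)
    show "measure (distr \<nu> borel point_map) (point_map ` S) = 1" using image[OF \<open>finite S\<close>] full by simp
    fix c' assume "c' \<in> point_map ` S"
    then obtain c where "c' = point_map c" by blast
    then show "measure (\<phi> \<nu>) {c'} = measure (distr \<nu> borel point_map) {c'}"
      using measure_image_singleton[OF N, of c] image[of "{c}"] by simp
  qed (use \<open>finite S\<close> real_distribution_image[OF N] in auto)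
qed

text \<open>Both sides are isometries that agree on the dense set of finitely supported measures.\<close>

lemma image_eq_distr:
  assumes M: "real_distribution \<mu>"
  shows "\<phi> \<mu> = distr \<mu> borel point_map"
proof -
  let ?T = "\<lambda>\<mu>. distr \<mu> borel point_map"
  have T: "real_distribution (?T \<mu>)" if "real_distribution \<mu>" for \<mu>
    using real_distribution_distr_borel[OF that]
      homeomorphism_UNIV_borel_measurable(2)[OF homeomorphism_point_map] .
  have dist_T: "kuiper_dist (?T \<mu>) (?T \<nu>) = kuiper_dist \<mu> \<nu>"
    if "real_distribution \<mu>" "real_distribution \<nu>" for \<mu> \<nu>
    using kuiper_dist_distr_homeomorphism[OF homeomorphism_symD[OF homeomorphism_point_map] that] .
  have small: "kuiper_dist (\<phi> \<mu>) (?T \<mu>) < 2 * e" if e: "0 < e" for e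
  proof -
    obtain \<nu> S where N: "real_distribution \<nu>" "finite S" "measure \<nu> S = 1" and "kuiper_dist \<mu> \<nu> < e"
      using real_distribution.finitely_supported_approximation[OF M e] by blast
    have "kuiper_dist (\<phi> \<mu>) (?T \<mu>) \<le> kuiper_dist (\<phi> \<mu>) (\<phi> \<nu>) + kuiper_dist (\<phi> \<nu>) (?T \<mu>)"
      using kuiper_dist_triangle[OF real_distribution_image[OF M] real_distribution_image[OF N(1)] T[OF M]] .
    also have "\<dots> = kuiper_dist \<mu> \<nu> + kuiper_dist \<nu> \<mu>"
      using kuiper_dist_image[OF M N(1)] dist_T[OF N(1) M] image_eq_distr_finite_support[OF N] by simp
    also have "\<dots> < 2 * e" using \<open>kuiper_dist \<mu> \<nu> < e\<close> by (simp add: kuiper_dist_commute)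
    finally show ?thesis .
  qed
  have "kuiper_dist (\<phi> \<mu>) (?T \<mu>) \<le> 0"
  proof (rule field_le_epsilon)
    fix e :: real assume "0 < e"
    then show "kuiper_dist (\<phi> \<mu>) (?T \<mu>) \<le> 0 + e" using small[of "e / 2"] by simp
  qed
  then have "kuiper_dist (\<phi> \<mu>) (?T \<mu>) = 0"
    using kuiper_dist_nonneg[OF real_distribution_image[OF M] T[OF M]] by linarith
  then show ?thesis
    using kuiper_dist_eq_0_iff[OF real_distribution_image[OF M] T[OF M]] by simp
qed

end

theorem theorem1p3:
  shows "(\<forall>\<phi>. (\<forall>\<mu>\<in>borel_prob_measures. \<phi> \<mu> \<in> borel_prob_measures)
            \<and> \<phi> ` borel_prob_measures = borel_prob_measures
            \<and> (\<forall>\<mu>\<in>borel_prob_measures. \<forall>\<nu>\<in>borel_prob_measures.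
                  kuiper_dist (\<phi> \<mu>) (\<phi> \<nu>) = kuiper_dist \<mu> \<nu>)
          \<longrightarrow> (\<exists>g g'. homeomorphism UNIV UNIV g g' \<and>
                 (\<forall>\<mu>\<in>borel_prob_measures. \<phi> \<mu> = comp_homeo \<mu> g)))
       \<and> (\<forall>g g'. homeomorphism (UNIV::real set) UNIV g g' \<longrightarrow>
            (\<forall>\<mu>\<in>borel_prob_measures. comp_homeo \<mu> g \<in> borel_prob_measures)
            \<and> (\<lambda>\<mu>. comp_homeo \<mu> g) ` borel_prob_measures = borel_prob_measures
            \<and> (\<forall>\<mu>\<in>borel_prob_measures. \<forall>\<nu>\<in>borel_prob_measures.
                  kuiper_dist (comp_homeo \<mu> g) (comp_homeo \<nu> g) = kuiper_dist \<mu> \<nu>))"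
  unfolding kuiper_surj_isometry_def[symmetric]
proof (intro conjI allI impI)
  fix \<phi> assume "kuiper_surj_isometry \<phi>"
  then interpret kuiper_isometry \<phi> by unfold_locales
  have "\<phi> \<mu> = comp_homeo \<mu> (inv point_map)" if "\<mu> \<in> borel_prob_measures" for \<mu>
    using image_eq_distr comp_homeo_eq_distr[OF homeomorphism_point_map] that
    by (simp add: borel_prob_measures_iff)
  then show "\<exists>g g'. homeomorphism UNIV UNIV g g' \<and> (\<forall>\<mu>\<in>borel_prob_measures. \<phi> \<mu> = comp_homeo \<mu> g)"
    using homeomorphism_point_map by blast
qed (fact kuiper_surj_isometry_comp_homeo)

end
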